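(* Let $r\ge1$ and $\mu>0$. The holomorphic map $f:M_{\Delta^r}(\mu)\to\ell^2(\mathbb C)$, $f(z,w)=(\psi_1,\dots,\psi_r,\Psi)$, where for $j=1,\dots,r$ $$\psi_j=\sqrt\mu\left(z_j,\frac{z_j^2}{\sqrt2},\dots,\frac{z_j^k}{\sqrt k},\dots\right),$$ and $\Psi$ has components indexed by $k=(k_1,\dots,k_r)\in\mathbb Z_{\ge0}^r$ and $a\in\mathbb Z_{\ge1}$ given by $$\frac1{\sqrt a}\sqrt{\binom{\mu a+k_1-1}{k_1}\cdots\binom{\mu a+k_r-1}{k_r}}\;z_1^{k_1}\cdots z_r^{k_r}w^a,$$ satisfies $\sum_j|f_j(z,w)|^2=-\log\left(\prod_{j=1}^r(1-|z_j|^2)^\mu-|w|^2\right)$; in particular $f^*\omega_0=\omega_{\Delta^r}(\mu)$.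
   Context: $M_{\Delta^r}(\mu)=\{(z,w)\in\Delta^r\times\mathbb C:|w|^2<\prod_{j=1}^r(1-|z_j|^2)^\mu\}$ with Kähler metric $\omega_{\Delta^r}(\mu)=\frac i2\partial\bar\partial\left(-\log\left(\prod_{j}(1-|z_j|^2)^\mu-|w|^2\right)\right)$. $\ell^2(\mathbb C)$ is the Hilbert space of square-summable complex sequences with flat Kähler form $\omega_0=\frac i2\partial\bar\partial\sum_j|x_j|^2$. Binomial coefficients with non-integer top entry are generalized: $\binom{x}{k}=x(x-1)\cdots(x-k+1)/k!$. *)

theory Defs
  imports "HOL-Analysis.Analysis"
begin

text \<open>Points of Delta^r x C are pairs (z, w) with z :: complex^'r (the index type 'r
  has r = CARD('r) >= 1 elements) and w :: complex.\<close>

definition M_Delta :: "real \<Rightarrow> ((complex ^ 'r) \<times> complex) set" where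
  "M_Delta \<mu> = {(z, w). (\<forall>j. norm (z $ j) < 1) \<and>
      (norm w)\<^sup>2 < (\<Prod>j\<in>UNIV. (1 - (norm (z $ j))\<^sup>2) powr \<mu>)}"

text \<open>Index set of the components of f: Inl (j, k) with k >= 1 indexes the k-th
  component of psi_j; Inr (k, a) with k a multi-index in Z_{>=0}^r and a >= 1
  indexes the components of Psi.\<close>

definition f_index :: "(('r \<times> nat) + ((nat ^ 'r) \<times> nat)) set" where
  "f_index = {Inl (j, k) | j k. k \<ge> 1} \<union> {Inr (k, a) | k a. a \<ge> 1}"

definition f_comp :: "real \<Rightarrow> complex ^ 'r \<Rightarrow> complex \<Rightarrow>
    ('r \<times> nat) + ((nat ^ 'r) \<times> nat) \<Rightarrow> complex" where
  "f_comp \<mu> z w i = (case i of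
      Inl (j, k) \<Rightarrow> complex_of_real (sqrt \<mu>) * (z $ j) ^ k / complex_of_real (sqrt (real k))
    | Inr (k, a) \<Rightarrow> complex_of_real (1 / sqrt (real a)) *
        complex_of_real (sqrt (\<Prod>j\<in>UNIV. (\<mu> * real a + real (k $ j) - 1) gchoose (k $ j))) *
        (\<Prod>j\<in>UNIV. (z $ j) ^ (k $ j)) * w ^ a)"

end

theory Submission
  imports Defs
begin

text \<open>All terms are nonnegative, so the sum may be computed by iterated summation in any
  grouping. Writing \<open>x\<^sub>j = |z\<^sub>j|\<^sup>2\<close>, \<open>t = |w|\<^sup>2\<close> and
  \<open>P = \<Prod>\<^sub>j (1 - x\<^sub>j)\<^sup>\<mu>\<close>, the components of \<open>\<psi>\<^sub>j\<close> add up,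
  by the logarithmic series, to \<open>-\<mu> log (1 - x\<^sub>j)\<close>. For fixed \<open>a\<close>, the
  components of \<open>\<Psi>\<close> factor into a product of negative binomial series
  \<open>\<Sum>\<^sub>k C(\<mu>a + k - 1, k) x\<^sup>k = (1 - x) powr (-\<mu>a)\<close>, giving
  \<open>(t/P)\<^sup>a / a\<close>, and the logarithmic series again sums these to \<open>-log (1 - t/P)\<close>.
  Finally \<open>-log P - log (1 - t/P) = -log (P - t)\<close>.\<close>

lemma has_sum_SigmaI_nonneg:
  fixes f :: "'a \<times> 'b \<Rightarrow> real"
  assumes "\<And>x. x \<in> A \<Longrightarrow> ((\<lambda>y. f (x, y)) has_sum g x) (B x)" and "(g has_sum S) A"
    and "\<And>x y. x \<in> A \<Longrightarrow> y \<in> B x \<Longrightarrow> f (x, y) \<ge> 0"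
  shows "(f has_sum S) (Sigma A B)"
  using assms has_sum_SigmaI summable_on_SigmaI has_sum_imp_summable by metis

lemma has_sum_prod_PiE_nonneg:
  fixes f :: "'a \<Rightarrow> 'b \<Rightarrow> real"
  assumes "finite A" and "\<And>x. x \<in> A \<Longrightarrow> (f x has_sum s x) (B x)"
    and "\<And>x y. x \<in> A \<Longrightarrow> y \<in> B x \<Longrightarrow> f x y \<ge> 0"
  shows "((\<lambda>g. \<Prod>x\<in>A. f x (g x)) has_sum (\<Prod>x\<in>A. s x)) (PiE A B)"
  using assms
proof (induction A rule: finite_induct)
  case empty
  then show ?case by (intro has_sum_finiteI) auto
next
  case (insert x F)
  have PiE_insert: "PiE (insert x F) B = (\<lambda>(g, y). g(x := y)) ` (PiE F B \<times> B x)"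
    unfolding PiE_insert_eq
    by (subst swap_product [symmetric]) (simp add: image_image case_prod_unfold)
  have inj: "inj_on (\<lambda>(g, y). g(x := y)) (PiE F B \<times> B x)"
    using \<open>x \<notin> F\<close> by (rule inj_combinator')
  have "(\<Prod>z\<in>F. f z ((g(x := y)) z)) = (\<Prod>z\<in>F. f z (g z))" for g y
    using insert.hyps by (intro prod.cong) auto
  then have split: "(\<lambda>g. \<Prod>x\<in>insert x F. f x (g x)) \<circ> (\<lambda>(g, y). g(x := y)) =
      (\<lambda>(p, y). f x y * (\<Prod>x'\<in>F. f x' (p x')))"
    using insert.hyps by (auto simp: fun_eq_iff)
  have IH: "((\<lambda>p. \<Prod>x\<in>F. f x (p x)) has_sum (\<Prod>x\<in>F. s x)) (PiE F B)"
    using insert by auto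
  have "((\<lambda>(p, y). f x y * (\<Prod>x'\<in>F. f x' (p x'))) has_sum s x * (\<Prod>x\<in>F. s x))
      (PiE F B \<times> B x)"
  proof (rule has_sum_SigmaI_nonneg)
    show "((\<lambda>y. case (p, y) of (p, y) \<Rightarrow> f x y * (\<Prod>x'\<in>F. f x' (p x')))
        has_sum s x * (\<Prod>x'\<in>F. f x' (p x'))) (B x)" for p
      using has_sum_cmult_left[OF insert.prems(1)[of x]] by simp
    show "((\<lambda>p. s x * (\<Prod>x'\<in>F. f x' (p x'))) has_sum s x * prod s F) (PiE F B)"
      by (rule has_sum_cmult_right[OF IH])
    show "0 \<le> (case (p, y) of (p, y) \<Rightarrow> f x y * (\<Prod>x'\<in>F. f x' (p x')))"
      if "p \<in> PiE F B" "y \<in> B x" for p y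
      using that insert.prems(2) by (auto intro!: mult_nonneg_nonneg prod_nonneg)
  qed
  then have "((\<lambda>g. \<Prod>x\<in>insert x F. f x (g x)) has_sum s x * (\<Prod>x\<in>F. s x))
      (PiE (insert x F) B)"
    unfolding PiE_insert has_sum_reindex[OF inj] split .
  then show ?case
    using insert.hyps by simp
qed

lemma has_sum_prod_vec_nonneg:
  fixes h :: "'r::finite \<Rightarrow> nat \<Rightarrow> real"
  assumes "\<And>j. (h j has_sum s j) UNIV" and "\<And>j n. h j n \<ge> 0"
  shows "((\<lambda>k::nat ^ 'r. \<Prod>j\<in>UNIV. h j (k $ j)) has_sum (\<Prod>j\<in>UNIV. s j)) UNIV"
proof -
  have "((\<lambda>g. \<Prod>j\<in>UNIV. h j (g j)) has_sum (\<Prod>j\<in>UNIV. s j)) (PiE UNIV (\<lambda>_. UNIV))"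
    by (rule has_sum_prod_PiE_nonneg) (use assms in auto)
  then have "((\<lambda>g. \<Prod>j\<in>UNIV. h j (g j)) has_sum (\<Prod>j\<in>UNIV. s j)) UNIV"
    by (simp add: PiE_UNIV_domain)
  moreover have inj: "inj (vec_lambda :: ('r \<Rightarrow> nat) \<Rightarrow> nat ^ 'r)"
    by (auto simp: inj_on_def vec_lambda_inject)
  ultimately have "((\<lambda>k::nat ^ 'r. \<Prod>j\<in>UNIV. h j (k $ j)) has_sum (\<Prod>j\<in>UNIV. s j))
      (range vec_lambda)"
    unfolding has_sum_reindex[OF inj] by (simp add: comp_def)
  moreover have "range (vec_lambda :: ('r \<Rightarrow> nat) \<Rightarrow> nat ^ 'r) = UNIV"
    by (metis surj_def vec_lambda_eta)
  ultimately show ?thesis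
    by simp
qed

lemma has_sum_minus_ln_one_minus:
  fixes y :: real
  assumes "0 \<le> y" and "y < 1"
  shows "((\<lambda>n. y ^ n / real n) has_sum - ln (1 - y)) {1..}"
proof -
  have "(\<lambda>n. - ((- (- y)) ^ n) / of_nat n) sums ln (1 + - y)"
    by (rule ln_series') (use assms in auto)
  then have "(\<lambda>n. y ^ n / real n) sums - ln (1 - y)"
    using sums_minus by fastforce
  then have "((\<lambda>n. y ^ n / real n) has_sum - ln (1 - y)) UNIV"
    by (rule sums_nonneg_imp_has_sum) (use assms in auto)
  then show ?thesis
    by (rule has_sum_cong_neutral[THEN iffD1, rotated -1]) auto
qed

lemma gbinomial_negative_binomial_nonneg:
  fixes m :: real
  assumes "m \<ge> 0"
  shows "(m + real n - 1) gchoose n \<ge> 0"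
  using assms
  by (cases "m = 0") (auto simp: gbinomial_pochhammer' pochhammer_nonneg pochhammer_0_left)

lemma has_sum_negative_binomial:
  fixes x m :: real
  assumes "0 \<le> x" and "x < 1" and "m \<ge> 0"
  shows "((\<lambda>n. ((m + real n - 1) gchoose n) * x ^ n) has_sum (1 - x) powr (- m)) UNIV"
proof -
  have "(\<lambda>n. ((- m) gchoose n) * (- x) ^ n) sums (1 + - x) powr (- m)"
    by (rule gen_binomial_real) (use assms in auto)
  moreover have "((- m) gchoose n) * (- x) ^ n = ((m + real n - 1) gchoose n) * x ^ n" for n
    by (simp add: gbinomial_minus power_minus[of x n] left_minus_one_mult_self)
  ultimately have "(\<lambda>n. ((m + real n - 1) gchoose n) * x ^ n) sums (1 - x) powr (- m)"
    by simp
  then show ?thesis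
    using assms gbinomial_negative_binomial_nonneg[OF assms(3)]
    by (auto intro!: sums_nonneg_imp_has_sum)
qed

lemma has_sum_multi_negative_binomial:
  fixes x :: "'r::finite \<Rightarrow> real" and m :: real
  assumes "\<And>j. 0 \<le> x j" and "\<And>j. x j < 1" and "m \<ge> 0"
  shows "((\<lambda>k::nat ^ 'r. \<Prod>j\<in>UNIV. ((m + real (k $ j) - 1) gchoose (k $ j)) * x j ^ (k $ j))
      has_sum (\<Prod>j\<in>UNIV. (1 - x j) powr (- m))) UNIV"
  using assms
  by (intro has_sum_prod_vec_nonneg has_sum_negative_binomial)
     (auto intro: mult_nonneg_nonneg gbinomial_negative_binomial_nonneg)

lemma prod_powr_one_minus_norm_sq_pos:
  fixes z :: "complex ^ 'r"
  assumes "\<And>j. norm (z $ j) < 1"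
  shows "(\<Prod>j\<in>UNIV. (1 - (norm (z $ j))\<^sup>2) powr \<mu>) > 0"
proof -
  have "(1 - (norm (z $ j))\<^sup>2) powr \<mu> > 0" for j
    using assms[of j] by (simp add: abs_square_less_1 less_imp_neq)
  then show ?thesis
    by (intro prod_pos) auto
qed

lemma ln_prod_powr_one_minus_norm_sq:
  fixes z :: "complex ^ 'r"
  assumes "\<And>j. norm (z $ j) < 1"
  shows "ln (\<Prod>j\<in>UNIV. (1 - (norm (z $ j))\<^sup>2) powr \<mu>) =
    (\<Sum>j\<in>UNIV. \<mu> * ln (1 - (norm (z $ j))\<^sup>2))"
proof -
  have "(1 - (norm (z $ j))\<^sup>2) powr \<mu> \<noteq> 0" for j
    using assms[of j] by (simp add: abs_square_less_1 less_imp_neq)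
  then show ?thesis
    by (subst ln_prod) (auto simp: ln_powr)
qed

lemma norm_f_comp_Inl_sq:
  assumes "\<mu> \<ge> 0"
  shows "(norm (f_comp \<mu> z w (Inl (j, k))))\<^sup>2 = \<mu> * ((norm (z $ j))\<^sup>2) ^ k / real k"
  using assms by (simp add: f_comp_def norm_mult norm_divide norm_power power_mult_distrib
      power_divide flip: power_mult) (simp add: mult.commute power_mult)

lemma norm_f_comp_Inr_sq:
  assumes "\<mu> \<ge> 0"
  shows "(norm (f_comp \<mu> z w (Inr (k, a))))\<^sup>2 = ((norm w)\<^sup>2) ^ a / real a *
    (\<Prod>j\<in>UNIV. ((\<mu> * real a + real (k $ j) - 1) gchoose (k $ j)) * ((norm (z $ j))\<^sup>2) ^ (k $ j))"
proof -
  have "(\<Prod>j\<in>UNIV. (\<mu> * real a + real (k $ j) - 1) gchoose (k $ j)) \<ge> 0"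
    using assms by (intro prod_nonneg) (simp add: gbinomial_negative_binomial_nonneg)
  then show ?thesis
    by (simp add: f_comp_def norm_mult norm_divide norm_power power_mult_distrib
        power_divide prod_norm[symmetric] prod_power_distrib prod.distrib flip: power_mult)
       (simp add: mult_ac power_mult)
qed

lemma has_sum_f_comp_Inl:
  assumes "\<mu> \<ge> 0" and "\<And>j. norm (z $ j) < 1"
  shows "((\<lambda>i. (norm (f_comp \<mu> z w i))\<^sup>2) has_sum
      (\<Sum>j\<in>UNIV. - \<mu> * ln (1 - (norm (z $ j))\<^sup>2))) {Inl (j, k) | j k. k \<ge> 1}"
proof -
  have sum: "((\<lambda>(j, k). \<mu> * ((norm (z $ j))\<^sup>2) ^ k / real k) has_sum
      (\<Sum>j\<in>UNIV. - \<mu> * ln (1 - (norm (z $ j))\<^sup>2))) (UNIV \<times> {1..})"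
  proof (rule has_sum_SigmaI_nonneg)
    show "((\<lambda>k. case (j, k) of (j, k) \<Rightarrow> \<mu> * ((norm (z $ j))\<^sup>2) ^ k / real k) has_sum
        - \<mu> * ln (1 - (norm (z $ j))\<^sup>2)) {1..}" for j
      using has_sum_cmult_right[OF has_sum_minus_ln_one_minus, of "(norm (z $ j))\<^sup>2" \<mu>]
        assms(2)[of j] by (simp add: abs_square_less_1)
  qed (use assms(1) in \<open>auto intro: has_sum_finiteI\<close>)
  have idx: "{Inl (j, k) | j k. k \<ge> 1} = Inl ` (UNIV \<times> {1..})"
    by auto
  show ?thesis
    unfolding idx has_sum_reindex[OF inj_Inl] comp_def
    using sum by (rule has_sum_cong[THEN iffD1, rotated]) (auto simp: norm_f_comp_Inl_sq assms(1))
qed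

lemma has_sum_f_comp_Inr:
  fixes \<mu> :: real and z :: "complex ^ 'r"
  defines "P \<equiv> \<Prod>j\<in>UNIV. (1 - (norm (z $ j))\<^sup>2) powr \<mu>"
  assumes "\<mu> \<ge> 0" and "\<And>j. norm (z $ j) < 1" and "(norm w)\<^sup>2 < P"
  shows "((\<lambda>i. (norm (f_comp \<mu> z w i))\<^sup>2) has_sum - ln (1 - (norm w)\<^sup>2 / P))
      {Inr (k, a) | k a. a \<ge> 1}"
proof -
  define x where "x j = (norm (z $ j))\<^sup>2" for j
  define t where "t = (norm w)\<^sup>2"
  have x: "0 \<le> x j" "x j < 1" for j
    using assms(3)[of j] by (auto simp: x_def abs_square_less_1)
  have P_pos: "P > 0"
    unfolding P_def using assms(3) by (rule prod_powr_one_minus_norm_sq_pos)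
  define F where "F a k = t ^ a / real a *
      (\<Prod>j\<in>UNIV. ((\<mu> * real a + real (k $ j) - 1) gchoose (k $ j)) * x j ^ (k $ j))"
    for a :: nat and k :: "nat ^ 'r"
  have "(F a has_sum (t / P) ^ a / real a) UNIV" for a
  proof -
    have "(1 - x j) powr (- (\<mu> * real a)) = inverse ((1 - x j) powr \<mu>) ^ a" for j
      using x(2)[of j] by (simp add: powr_minus powr_powr[symmetric] powr_realpow power_inverse)
    then have "(\<Prod>j\<in>UNIV. (1 - x j) powr (- (\<mu> * real a))) = inverse P ^ a"
      by (simp add: P_def x_def prod_inversef[symmetric] prod_power_distrib)
    then have inner: "((\<lambda>k. \<Prod>j\<in>UNIV. ((\<mu> * real a + real (k $ j) - 1) gchoose (k $ j)) * x j ^ (k $ j))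
        has_sum inverse P ^ a) UNIV"
      using has_sum_multi_negative_binomial[of x "\<mu> * real a"] x assms(2) by simp
    have eq: "t ^ a / real a * inverse P ^ a = (t / P) ^ a / real a"
      by (simp add: power_divide field_simps)
    show ?thesis
      using has_sum_cmult_right[OF inner, of "t ^ a / real a"] unfolding eq F_def[abs_def] .
  qed
  moreover have "((\<lambda>a. (t / P) ^ a / real a) has_sum - ln (1 - t / P)) {1..}"
    using P_pos assms(4) by (intro has_sum_minus_ln_one_minus) (simp_all add: t_def)
  moreover have "F a k \<ge> 0" for a k
    using x assms(2) unfolding F_def
    by (intro mult_nonneg_nonneg divide_nonneg_nonneg prod_nonneg gbinomial_negative_binomial_nonneg)
       (simp_all add: t_def)
  ultimately have "((\<lambda>(a, k). F a k) has_sum - ln (1 - t / P)) ({1..} \<times> UNIV)"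
    by (intro has_sum_SigmaI_nonneg) auto
  moreover have idx: "{Inr (k, a) | k a. a \<ge> 1} = (\<lambda>(a, k). Inr (k, a)) ` ({1..} \<times> UNIV)"
    by auto
  moreover have inj: "inj_on (\<lambda>(a, k). Inr (k, a)) ({1..} \<times> (UNIV :: (nat ^ 'r) set))"
    by (auto simp: inj_on_def)
  ultimately show ?thesis
    unfolding idx has_sum_reindex[OF inj] comp_def
    using assms(2) by (simp add: case_prod_unfold norm_f_comp_Inr_sq F_def x_def t_def)
qed

lemma minus_ln_diff_eq:
  fixes P t :: real
  assumes "0 < P" and "t < P"
  shows "- ln (P - t) = - ln P - ln (1 - t / P)"
proof -
  have "P - t = P * (1 - t / P)" and "1 - t / P > 0"
    using assms by (simp_all add: field_simps)
  then show ?thesis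
    using assms(1) by (simp add: ln_mult)
qed

theorem lemma5p1:
  fixes \<mu> :: real and z :: "complex ^ 'r" and w :: complex
  assumes "\<mu> > 0" and "(z, w) \<in> M_Delta \<mu>"
  shows "((\<lambda>i. (norm (f_comp \<mu> z w i))\<^sup>2) has_sum
           (- ln ((\<Prod>j\<in>UNIV. (1 - (norm (z $ j))\<^sup>2) powr \<mu>) - (norm w)\<^sup>2))) f_index"
proof -
  define P where "P = (\<Prod>j\<in>UNIV. (1 - (norm (z $ j))\<^sup>2) powr \<mu>)"
  have z: "\<And>j. norm (z $ j) < 1" and w: "(norm w)\<^sup>2 < P"
    using assms(2) by (auto simp: M_Delta_def P_def)
  have "P > 0"
    unfolding P_def using z by (rule prod_powr_one_minus_norm_sq_pos)
  have "ln P = (\<Sum>j\<in>UNIV. \<mu> * ln (1 - (norm (z $ j))\<^sup>2))"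
    unfolding P_def using z by (rule ln_prod_powr_one_minus_norm_sq)
  then have ln_split: "- ln (P - (norm w)\<^sup>2) =
      (\<Sum>j\<in>UNIV. - \<mu> * ln (1 - (norm (z $ j))\<^sup>2)) + - ln (1 - (norm w)\<^sup>2 / P)"
    using minus_ln_diff_eq[OF \<open>P > 0\<close> w] by (simp add: sum_negf)
  have "((\<lambda>i. (norm (f_comp \<mu> z w i))\<^sup>2) has_sum
      (\<Sum>j\<in>UNIV. - \<mu> * ln (1 - (norm (z $ j))\<^sup>2))) {Inl (j, k) | j k. k \<ge> 1}"
    using assms(1) z by (intro has_sum_f_comp_Inl) auto
  moreover have "((\<lambda>i. (norm (f_comp \<mu> z w i))\<^sup>2) has_sum - ln (1 - (norm w)\<^sup>2 / P))
      {Inr (k, a) | k a. a \<ge> 1}"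
    unfolding P_def using assms(1) z w by (intro has_sum_f_comp_Inr) (auto simp: P_def)
  ultimately have "((\<lambda>i. (norm (f_comp \<mu> z w i))\<^sup>2) has_sum - ln (P - (norm w)\<^sup>2))
      ({Inl (j, k) | j k. k \<ge> 1} \<union> {Inr (k, a) | k a. a \<ge> 1})"
    unfolding ln_split by (rule has_sum_Un_disjoint) auto
  then show ?thesis
    by (simp add: f_index_def P_def)
qed


end
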